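(* Let $(A,B)$ be controllable, $Q,R$ positive definite, $\theta\in\mathbb R^n$, and let $P^e$ be the unique positive definite solution of the DARE $P^e=Q+A^\top(P^e-P^eB(B^\top P^eB+R)^{-1}B^\top P^e)A$. Set $M^e=P^e-P^eB(R+B^\top P^eB)^{-1}B^\top P^e$, $H^e=M^e-M^eA(Q+A^\top M^eA)^{-1}A^\top M^e$, $K^e=(R+B^\top P^eB)^{-1}B^\top P^eA$, $K'=(R+B^\top P^eB)^{-1}B^\top P^e$, $\alpha^e=(I-(A-BK^e)^\top)^{-1}Q\theta$ (so $\alpha^e=Q\theta+(A-BK^e)^\top\alpha^e$), and $\beta^e=(P^e)^{-1}\alpha^e=F\theta$ with $F=(P^e)^{-1}(I-(A-BK^e)^\top)^{-1}Q$. Then: (i) for every initial state $x_0$, the optimal average cost $\lambda^e=\lim_{N\to\infty}\frac1N\min\sum_{t=0}^{N-1}\big[\frac12(x_t-\theta)^\top Q(x_t-\theta)+\frac12u_t^\top Ru_t\big]$ (minimum over $x_{t+1}=Ax_t+Bu_t$) exists, does not depend on $x_0$, and equals $\frac12(A\theta-\beta^e)^\top H^e(A\theta-\beta^e)$; (ii) $h^e(x)=\frac12(x-\beta^e)^\top P^e(x-\beta^e)$ satisfies the Bellman equation $h^e(x)+\lambda^e=\min_u\big(\frac12(x-\theta)^\top Q(x-\theta)+\frac12u^\top Ru+h^e(Ax+Bu)\big)$ for all $x$; (iii) the stationary controller $u=-K^ex+K'\beta^e$ attains long-run average cost at most $\lambda^e$, hence is optimal.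
   Context: Here $I-(A-BK^e)^\top$ is invertible since $A-BK^e$ is Schur stable (all eigenvalues in the open unit disk). Matrix inequalities/positive definiteness are in the Loewner sense. *)

theory Defs
  imports "HOL-Analysis.Analysis"
begin

definition pos_def_mat :: "real^'n^'n \<Rightarrow> bool" where
  "pos_def_mat M \<longleftrightarrow> transpose M = M \<and> (\<forall>x. x \<noteq> 0 \<longrightarrow> x \<bullet> (M *v x) > 0)"

text \<open>Controllability of (A,B): the controllability matrix [B, AB, ..., A^(n-1)B]
  has full row rank n, i.e. its column space is all of R^n.\<close>
definition controllable :: "real^'n^'n \<Rightarrow> real^'m^'n \<Rightarrow> bool" where
  "controllable A B \<longleftrightarrow>
     span {((\<lambda>v. A *v v) ^^ k) (B *v u) | k u. k < CARD('n)} = UNIV"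

fun traj :: "real^'n^'n \<Rightarrow> real^'m^'n \<Rightarrow> real^'n \<Rightarrow> (nat \<Rightarrow> real^'m) \<Rightarrow> nat \<Rightarrow> real^'n" where
  "traj A B x0 u 0 = x0"
| "traj A B x0 u (Suc t) = A *v traj A B x0 u t + B *v u t"

definition stage_cost :: "real^'n^'n \<Rightarrow> real^'m^'m \<Rightarrow> real^'n \<Rightarrow> real^'n \<Rightarrow> real^'m \<Rightarrow> real" where
  "stage_cost Q R \<theta> x u = (1/2) * ((x - \<theta>) \<bullet> (Q *v (x - \<theta>))) + (1/2) * (u \<bullet> (R *v u))"

definition cost_N :: "real^'n^'n \<Rightarrow> real^'m^'n \<Rightarrow> real^'n^'n \<Rightarrow> real^'m^'m \<Rightarrow> real^'n
    \<Rightarrow> nat \<Rightarrow> real^'n \<Rightarrow> (nat \<Rightarrow> real^'m) \<Rightarrow> real" where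
  "cost_N A B Q R \<theta> N x0 u = (\<Sum>t<N. stage_cost Q R \<theta> (traj A B x0 u t) (u t))"

definition opt_cost_N :: "real^'n^'n \<Rightarrow> real^'m^'n \<Rightarrow> real^'n^'n \<Rightarrow> real^'m^'m \<Rightarrow> real^'n
    \<Rightarrow> nat \<Rightarrow> real^'n \<Rightarrow> real" where
  "opt_cost_N A B Q R \<theta> N x0 = (INF u. cost_N A B Q R \<theta> N x0 u)"

fun cl_traj :: "real^'n^'n \<Rightarrow> real^'m^'n \<Rightarrow> real^'n^'m \<Rightarrow> real^'m \<Rightarrow> real^'n \<Rightarrow> nat \<Rightarrow> real^'n" where
  "cl_traj A B K k0 x0 0 = x0"
| "cl_traj A B K k0 x0 (Suc t) =
     A *v cl_traj A B K k0 x0 t + B *v (k0 - K *v cl_traj A B K k0 x0 t)"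


definition M_e :: "real^'m^'n \<Rightarrow> real^'m^'m \<Rightarrow> real^'n^'n \<Rightarrow> real^'n^'n" where
  "M_e B R P = P - P ** B ** matrix_inv (R + transpose B ** P ** B) ** transpose B ** P"

definition H_e :: "real^'n^'n \<Rightarrow> real^'m^'n \<Rightarrow> real^'n^'n \<Rightarrow> real^'m^'m \<Rightarrow> real^'n^'n \<Rightarrow> real^'n^'n" where
  "H_e A B Q R P = M_e B R P - M_e B R P ** A ** matrix_inv (Q + transpose A ** M_e B R P ** A)
                      ** transpose A ** M_e B R P"

definition K_e :: "real^'n^'n \<Rightarrow> real^'m^'n \<Rightarrow> real^'m^'m \<Rightarrow> real^'n^'n \<Rightarrow> real^'n^'m" where
  "K_e A B R P = matrix_inv (R + transpose B ** P ** B) ** transpose B ** P ** A"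

definition K'_e :: "real^'m^'n \<Rightarrow> real^'m^'m \<Rightarrow> real^'n^'n \<Rightarrow> real^'n^'m" where
  "K'_e B R P = matrix_inv (R + transpose B ** P ** B) ** transpose B ** P"

definition alpha_e :: "real^'n^'n \<Rightarrow> real^'m^'n \<Rightarrow> real^'n^'n \<Rightarrow> real^'m^'m \<Rightarrow> real^'n^'n \<Rightarrow> real^'n \<Rightarrow> real^'n" where
  "alpha_e A B Q R P \<theta> = matrix_inv (mat 1 - transpose (A - B ** K_e A B R P)) *v (Q *v \<theta>)"

definition beta_e :: "real^'n^'n \<Rightarrow> real^'m^'n \<Rightarrow> real^'n^'n \<Rightarrow> real^'m^'m \<Rightarrow> real^'n^'n \<Rightarrow> real^'n \<Rightarrow> real^'n" where
  "beta_e A B Q R P \<theta> = matrix_inv P *v alpha_e A B Q R P \<theta>"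

definition lambda_e :: "real^'n^'n \<Rightarrow> real^'m^'n \<Rightarrow> real^'n^'n \<Rightarrow> real^'m^'m \<Rightarrow> real^'n^'n \<Rightarrow> real^'n \<Rightarrow> real" where
  "lambda_e A B Q R P \<theta> = (1/2) * ((A *v \<theta> - beta_e A B Q R P \<theta>)
        \<bullet> (H_e A B Q R P *v (A *v \<theta> - beta_e A B Q R P \<theta>)))"

definition h_e :: "real^'n^'n \<Rightarrow> real^'m^'n \<Rightarrow> real^'n^'n \<Rightarrow> real^'m^'m \<Rightarrow> real^'n^'n \<Rightarrow> real^'n \<Rightarrow> real^'n \<Rightarrow> real" where
  "h_e A B Q R P \<theta> x = (1/2) * ((x - beta_e A B Q R P \<theta>) \<bullet> (P *v (x - beta_e A B Q R P \<theta>)))"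

end

theory Submission
  imports Defs
begin

text \<open>Write W = R + B'PB and u*(x) = K' beta - K x. Completing the square in the input and
  using the Riccati equation together with the fixed-point equation of alpha turns the Bellman
  recursion into the exact identity
  c(x,u) + h(Ax+Bu) = h(x) + lambda + 1/2 (u - u*(x))' W (u - u*(x)).
  Summed along a trajectory it telescopes: the feedback u* pays exactly
  N lambda + h(x_0) - h(x_N) <= N lambda + h(x_0), and every input sequence pays at least
  N lambda + h(x_0) - h(x_N). The defect h(x_N) is not bounded a priori, but h is dominated by
  the stage cost, so averaging the lower bound over the last m stages costs only O(N/m),
  which gives the limit lambda.\<close>

section \<open>Quadratic forms\<close>

lemma inner_matrix_vector_transpose:
  fixes M :: "real^'n^'m"
  shows "x \<bullet> (M *v y) = (transpose M *v x) \<bullet> y"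
  by (simp add: dot_lmul_matrix)

lemma inner_transpose_left:
  fixes M :: "real^'n^'m"
  shows "x \<bullet> (transpose M *v y) = (M *v x) \<bullet> y"
  using inner_matrix_vector_transpose[of x "transpose M" y] by simp

declare transpose_matrix_vector [simp del]

lemma matrix_vector_mult_neg: "(M :: real^'n^'m) *v (- x) = - (M *v x)"
  by (metis diff_0 matrix_vector_mult_0_right matrix_vector_mult_diff_distrib)

lemma transpose_add: "transpose (A + B :: real^'n^'m) = transpose A + transpose B"
  by (simp add: transpose_def vec_eq_iff)

lemma transpose_diff: "transpose (A - B :: real^'n^'m) = transpose A - transpose B"
  by (simp add: transpose_def vec_eq_iff)

lemma pos_def_mat_symmetric:
  assumes "pos_def_mat M"
  shows "x \<bullet> (M *v y) = y \<bullet> (M *v x)"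
proof -
  have "transpose M = M" using assms unfolding pos_def_mat_def by blast
  then show ?thesis by (metis inner_matrix_vector_transpose inner_commute)
qed

lemma pos_def_mat_nonneg:
  assumes "pos_def_mat M"
  shows "0 \<le> x \<bullet> (M *v x)"
  using assms unfolding pos_def_mat_def by (cases "x = 0") (auto intro: less_imp_le)

lemma pos_def_mat_eq_0:
  assumes "pos_def_mat M" and "x \<bullet> (M *v x) \<le> 0"
  shows "x = 0"
  using assms unfolding pos_def_mat_def by (meson not_less)

lemma invertible_if_kernel_trivial:
  fixes A :: "real^'n^'n"
  assumes "\<And>x. A *v x = 0 \<Longrightarrow> x = 0"
  shows "invertible A"
  using assms matrix_left_invertible_ker invertible_left_inverse by blast

lemma matrix_inv_cancel:
  fixes A :: "real^'n^'n"
  assumes "invertible A"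
  shows "A *v (matrix_inv A *v v) = v" and "matrix_inv A *v (A *v v) = v"
proof -
  have "A ** matrix_inv A = mat 1 \<and> matrix_inv A ** A = mat 1"
    using assms unfolding matrix_inv_def invertible_def by (rule someI_ex)
  then show "A *v (matrix_inv A *v v) = v" "matrix_inv A *v (A *v v) = v"
    by (metis matrix_vector_mul_assoc matrix_vector_mul_lid)+
qed

lemma pos_def_mat_invertible:
  assumes "pos_def_mat M"
  shows "invertible M"
  by (rule invertible_if_kernel_trivial) (rule pos_def_mat_eq_0[OF assms], simp)

lemma pos_def_mat_inverse_symmetric:
  assumes "pos_def_mat M"
  shows "a \<bullet> (matrix_inv M *v b) = b \<bullet> (matrix_inv M *v a)"
proof -
  note cancel = matrix_inv_cancel(1)[OF pos_def_mat_invertible[OF assms]]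
  have "a \<bullet> (matrix_inv M *v b) = (matrix_inv M *v b) \<bullet> (M *v (matrix_inv M *v a))"
    by (simp add: cancel inner_commute)
  also have "\<dots> = (matrix_inv M *v a) \<bullet> (M *v (matrix_inv M *v b))"
    by (rule pos_def_mat_symmetric[OF assms])
  also have "\<dots> = b \<bullet> (matrix_inv M *v a)"
    by (simp add: cancel inner_commute)
  finally show ?thesis .
qed

lemma quadratic_form_diff:
  fixes S :: "real^'n^'n"
  assumes "\<And>a b. a \<bullet> (S *v b) = b \<bullet> (S *v a)"
  shows "(x - y) \<bullet> (S *v (x - y)) = x \<bullet> (S *v x) - 2 * (x \<bullet> (S *v y)) + y \<bullet> (S *v y)"
  using assms[of y x]
  by (simp add: matrix_vector_mult_diff_distrib inner_diff_left inner_diff_right)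

lemma quadratic_form_add:
  fixes S :: "real^'n^'n"
  assumes "\<And>a b. a \<bullet> (S *v b) = b \<bullet> (S *v a)"
  shows "(x + y) \<bullet> (S *v (x + y)) = x \<bullet> (S *v x) + 2 * (x \<bullet> (S *v y)) + y \<bullet> (S *v y)"
  using assms[of y x]
  by (simp add: matrix_vector_right_distrib inner_add_left inner_add_right)

lemma pos_def_mat_coercive:
  fixes Q :: "real^'n^'n"
  assumes "pos_def_mat Q"
  obtains \<mu> where "\<mu> > 0" and "\<And>y. \<mu> * (norm y)^2 \<le> y \<bullet> (Q *v y)"
proof -
  let ?S = "sphere (0::real^'n) 1"
  let ?f = "\<lambda>y. y \<bullet> (Q *v y)"
  obtain e :: "real^'n" where "norm e = 1" using vector_choose_size[of 1] by auto
  then have "?S \<noteq> {}" by auto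
  moreover have "continuous_on ?S ?f"
    by (intro continuous_on_inner continuous_on_id linear_continuous_on
        matrix_vector_mul_bounded_linear)
  ultimately obtain y0 where y0: "y0 \<in> ?S" and min: "\<And>y. y \<in> ?S \<Longrightarrow> ?f y0 \<le> ?f y"
    using continuous_attains_inf[OF compact_sphere] by blast
  have "y0 \<noteq> 0" using y0 by auto
  then have pos: "?f y0 > 0" using assms unfolding pos_def_mat_def by blast
  have "?f y0 * (norm y)^2 \<le> ?f y" for y
  proof (cases "y = 0")
    case False
    let ?y = "(1 / norm y) *\<^sub>R y"
    have "?f y0 \<le> ?f ?y" using False by (intro min) simp
    also have "\<dots> = ?f y / (norm y)^2"
      by (simp add: matrix_vector_mult_scaleR power2_eq_square)
    finally show ?thesis using False by (simp add: field_simps)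
  qed simp
  with pos show thesis by (rule that)
qed

lemma quadratic_form_le_norm_square:
  fixes P :: "real^'n^'n"
  obtains C where "C \<ge> 0" and "\<And>y. y \<bullet> (P *v y) \<le> C * (norm y)^2"
proof -
  obtain K where K: "\<And>x. norm (P *v x) \<le> norm x * K"
    using bounded_linear.bounded[OF matrix_vector_mul_bounded_linear] by blast
  have "y \<bullet> (P *v y) \<le> max K 0 * (norm y)^2" for y
  proof -
    have "y \<bullet> (P *v y) \<le> norm y * norm (P *v y)" by (rule norm_cauchy_schwarz)
    also have "\<dots> \<le> norm y * (norm y * max K 0)"
      by (meson K max.cobounded1 mult_left_mono norm_ge_zero order_trans)
    finally show ?thesis by (simp add: power2_eq_square algebra_simps)
  qed
  then show thesis using that[of "max K 0"] by simp
qed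

lemma shifted_quadratic_form_dominated:
  fixes P Q :: "real^'n^'n"
  assumes "pos_def_mat Q"
  obtains a b where "a \<ge> 0"
    and "\<And>x. (x - \<beta>) \<bullet> (P *v (x - \<beta>)) \<le> a * ((x - \<theta>) \<bullet> (Q *v (x - \<theta>))) + b"
proof -
  obtain \<mu> where \<mu>: "\<mu> > 0" "\<And>y. \<mu> * (norm y)^2 \<le> y \<bullet> (Q *v y)"
    using pos_def_mat_coercive[OF assms] by blast
  obtain C where C: "C \<ge> 0" "\<And>y. y \<bullet> (P *v y) \<le> C * (norm y)^2"
    using quadratic_form_le_norm_square by blast
  have "(x - \<beta>) \<bullet> (P *v (x - \<beta>))
      \<le> (2 * C / \<mu>) * ((x - \<theta>) \<bullet> (Q *v (x - \<theta>))) + 2 * C * (norm (\<theta> - \<beta>))^2" for x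
  proof -
    let ?p = "norm (x - \<theta>)" and ?q = "norm (\<theta> - \<beta>)"
    have "norm (x - \<beta>) \<le> ?p + ?q"
      using norm_triangle_ineq[of "x - \<theta>" "\<theta> - \<beta>"] by simp
    then have "(norm (x - \<beta>))^2 \<le> (?p + ?q)^2" by (simp add: power_mono)
    also have "\<dots> \<le> 2 * ?p^2 + 2 * ?q^2"
      using zero_le_power2[of "?p - ?q"] unfolding power2_sum power2_diff by linarith
    finally have "(x - \<beta>) \<bullet> (P *v (x - \<beta>)) \<le> C * (2 * ?p^2 + 2 * ?q^2)"
      using C by (meson mult_left_mono order_trans)
    moreover have "C * ?p^2 \<le> (C / \<mu>) * ((x - \<theta>) \<bullet> (Q *v (x - \<theta>)))"
      using mult_left_mono[OF \<mu>(2)[of "x - \<theta>"], of "C / \<mu>"] \<mu>(1) C(1) by simp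
    moreover have "C * (2 * ?p^2 + 2 * ?q^2) = 2 * (C * ?p^2) + 2 * C * ?q^2"
      by (simp add: algebra_simps)
    ultimately show ?thesis by simp
  qed
  moreover have "2 * C / \<mu> \<ge> 0" using C(1) \<mu>(1) by simp
  ultimately show thesis by (rule that[rotated])
qed

section \<open>Average cost from a Bellman inequality\<close>

lemma bellman_window_lower_bound:
  fixes c :: "'x \<Rightarrow> 'u \<Rightarrow> real" and h :: "'x \<Rightarrow> real"
  assumes bellman: "\<And>t. h (xs t) + l \<le> c (xs t) (us t) + h (xs (Suc t))"
    and c_nonneg: "\<And>x u. 0 \<le> c x u" and h_nonneg: "\<And>x. 0 \<le> h x"
    and "0 \<le> l" and "0 \<le> a"
    and h_le: "\<And>x u. h x \<le> a * c x u + b"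
    and "m \<le> N"
  shows "real m * (real N - real m) * l - real m * b \<le> (real m + a) * (\<Sum>t<N. c (xs t) (us t))"
proof -
  let ?S = "\<lambda>k. \<Sum>t<k. c (xs t) (us t)"
  let ?W = "{N - m..<N}"
  have telescope: "real k * l + h (xs 0) - h (xs k) \<le> ?S k" for k
  proof (induction k)
    case (Suc k)
    then show ?case using bellman[of k] by (simp add: algebra_simps)
  qed simp
  have partial_le: "(\<Sum>t\<in>T. c (xs t) (us t)) \<le> ?S N" if "T \<subseteq> {..<N}" for T
    by (rule sum_mono2) (use that c_nonneg in auto)
  have window_term: "real (N - m) * l - a * c (xs k) (us k) - b \<le> ?S N" if "k \<in> ?W" for k
  proof -
    have "real (N - m) * l \<le> real k * l" using that \<open>0 \<le> l\<close> by (simp add: mult_right_mono)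
    moreover have "real k * l - h (xs k) \<le> ?S k" using telescope[of k] h_nonneg[of "xs 0"] by linarith
    moreover have "?S k \<le> ?S N" using that by (intro partial_le) auto
    ultimately show ?thesis using h_le[of "xs k" "us k"] by linarith
  qed
  have "(\<Sum>k\<in>?W. real (N - m) * l - a * c (xs k) (us k) - b) \<le> (\<Sum>k\<in>?W. ?S N)"
    by (rule sum_mono) (rule window_term)
  then have "real m * (real (N - m) * l) - a * (\<Sum>k\<in>?W. c (xs k) (us k)) - real m * b \<le> real m * ?S N"
    using \<open>m \<le> N\<close> by (simp add: sum_subtractf sum_distrib_left)
  moreover have "a * (\<Sum>k\<in>?W. c (xs k) (us k)) \<le> a * ?S N"
    using \<open>0 \<le> a\<close> by (intro mult_left_mono partial_le) auto
  ultimately show ?thesis using \<open>m \<le> N\<close> by (simp add: algebra_simps of_nat_diff)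
qed

lemma average_tendsto_of_window_bounds:
  fixes V :: "nat \<Rightarrow> real"
  assumes "0 \<le> l" and "0 \<le> a" and "0 \<le> e"
    and upper: "\<And>N. V N \<le> real N * l + e"
    and lower: "\<And>N m. 1 \<le> m \<Longrightarrow> m \<le> N \<Longrightarrow>
                 real m * (real N - real m) * l - real m * b \<le> (real m + a) * V N"
  shows "(\<lambda>N. V N / real N) \<longlonglongrightarrow> l"
proof (rule LIMSEQ_I)
  fix r :: real assume "0 < r"
  define m where "m = nat \<lceil>2 * a * l / r\<rceil> + 1"
  have "1 \<le> m" unfolding m_def by simp
  have "real m > 2 * a * l / r" unfolding m_def by linarith
  then have a_l_m: "a * l / real m < r / 2" using \<open>0 < r\<close> \<open>1 \<le> m\<close> by (simp add: field_simps)
  define D where "D = real m * l + \<bar>b\<bar> + a * e + e"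
  define N0 where "N0 = max m (nat \<lceil>2 * D / r\<rceil> + 1)"
  show "\<exists>N0. \<forall>N\<ge>N0. norm (V N / real N - l) < r"
  proof (intro exI allI impI)
    fix N assume "N0 \<le> N"
    then have "m \<le> N" and "2 * D / r < real N" unfolding N0_def by linarith+
    then have D_small: "2 * D < real N * r" and N_pos: "0 < real N"
      using \<open>0 < r\<close> \<open>1 \<le> m\<close> by (simp_all add: field_simps)
    have "real m * V N \<ge> real m * (real N - real m) * l - real m * b - a * (real N * l + e)"
      using lower[OF \<open>1 \<le> m\<close> \<open>m \<le> N\<close>] mult_left_mono[OF upper[of N] \<open>0 \<le> a\<close>]
      by (simp add: algebra_simps)
    then have "V N \<ge> real N * l - real m * l - b - (a * (real N * l + e)) / real m"
      using \<open>1 \<le> m\<close> by (simp add: field_simps)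
    moreover have "(a * (real N * l + e)) / real m = real N * (a * l / real m) + a * e / real m"
      by (simp add: field_simps add_divide_distrib)
    moreover have "a * e / real m \<le> a * e"
      using frac_le[of "a * e" "a * e" 1 "real m"] \<open>1 \<le> m\<close> \<open>0 \<le> a\<close> \<open>0 \<le> e\<close> by simp
    moreover have "real N * (a * l / real m) \<le> real N * (r / 2)"
      using a_l_m N_pos by (intro mult_left_mono) auto
    ultimately have "V N - real N * l \<ge> - D - real N * (r / 2)"
      unfolding D_def using abs_ge_self[of b] \<open>0 \<le> e\<close> by linarith
    moreover have "V N - real N * l \<le> D"
      using upper[of N] \<open>0 \<le> l\<close> \<open>0 \<le> a\<close> \<open>0 \<le> e\<close> unfolding D_def
      by (smt (verit) abs_ge_zero mult_nonneg_nonneg of_nat_0_le_iff)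
    ultimately have "\<bar>V N - real N * l\<bar> < real N * r"
      using D_small \<open>0 < r\<close> by (simp add: abs_le_iff)
    then show "norm (V N / real N - l) < r"
      using N_pos by (simp add: field_simps abs_divide[symmetric] abs_less_iff)
  qed
qed

lemma limsup_average_le:
  fixes S :: "nat \<Rightarrow> real"
  assumes "\<And>N. S N \<le> real N * l + e"
  shows "limsup (\<lambda>N. ereal (S N / real N)) \<le> ereal l"
proof -
  have "\<forall>\<^sub>F N in sequentially. ereal (S N / real N) \<le> ereal (l + e / real N)"
  proof (rule eventually_sequentiallyI[of 1])
    fix N :: nat assume "1 \<le> N"
    then show "ereal (S N / real N) \<le> ereal (l + e / real N)"
      using assms[of N] by (simp add: field_simps)
  qed
  then have "limsup (\<lambda>N. ereal (S N / real N)) \<le> limsup (\<lambda>N. ereal (l + e / real N))"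
    by (rule Limsup_mono)
  moreover have "(\<lambda>N. ereal (l + e / real N)) \<longlonglongrightarrow> ereal l"
    using tendsto_add[OF tendsto_const lim_const_over_n, of l e] by (simp add: lim_ereal)
  ultimately show ?thesis by (simp add: lim_imp_Limsup)
qed

section \<open>Solutions of the discrete algebraic Riccati equation\<close>

locale dare_solution =
  fixes A :: "real^'n^'n" and B :: "real^'m^'n"
    and Q :: "real^'n^'n" and R :: "real^'m^'m" and P :: "real^'n^'n"
  assumes Q_pd: "pos_def_mat Q" and R_pd: "pos_def_mat R" and P_pd: "pos_def_mat P"
    and DARE: "P = Q + transpose A ** (P - P ** B ** matrix_inv (transpose B ** P ** B + R)
                      ** transpose B ** P) ** A"
begin

definition W :: "real^'m^'m" where
  "W = R + transpose B ** P ** B"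

abbreviation M :: "real^'n^'n" where "M \<equiv> M_e B R P"
abbreviation K :: "real^'n^'m" where "K \<equiv> K_e A B R P"
abbreviation \<beta> :: "real^'n \<Rightarrow> real^'n" where "\<beta> \<equiv> beta_e A B Q R P"

definition feedback :: "real^'n \<Rightarrow> real^'n \<Rightarrow> real^'m" where
  "feedback \<theta> x = K'_e B R P *v \<beta> \<theta> - K *v x"

lemma W_form: "a \<bullet> (W *v b) = a \<bullet> (R *v b) + (B *v a) \<bullet> (P *v (B *v b))"
  by (simp add: W_def matrix_vector_mult_add_rdistrib matrix_vector_mul_assoc[symmetric]
      inner_add_right inner_matrix_vector_transpose)

lemma W_pd: "pos_def_mat W"
proof -
  have "transpose W = W"
    using P_pd R_pd
    by (simp add: W_def pos_def_mat_def transpose_add matrix_transpose_mul matrix_mul_assoc)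
  moreover have "x \<bullet> (W *v x) > 0" if "x \<noteq> 0" for x
    using R_pd that pos_def_mat_nonneg[OF P_pd, of "B *v x"]
    by (simp add: W_form pos_def_mat_def add_pos_nonneg)
  ultimately show ?thesis unfolding pos_def_mat_def by blast
qed

lemma W_inverse_cancel: "W *v (matrix_inv W *v v) = v"
  using matrix_inv_cancel(1)[OF pos_def_mat_invertible[OF W_pd]] .

lemma M_apply: "M *v y = P *v y - P *v (B *v (matrix_inv W *v (transpose B *v (P *v y))))"
  by (simp add: M_e_def W_def matrix_vector_mult_diff_rdistrib matrix_vector_mul_assoc[symmetric])

lemma M_form:
  "y \<bullet> (M *v z) = y \<bullet> (P *v z)
     - (transpose B *v (P *v y)) \<bullet> (matrix_inv W *v (transpose B *v (P *v z)))"
proof -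
  have "y \<bullet> (P *v (B *v (matrix_inv W *v (transpose B *v (P *v z)))))
      = (transpose B *v (P *v y)) \<bullet> (matrix_inv W *v (transpose B *v (P *v z)))"
    by (metis pos_def_mat_symmetric[OF P_pd] inner_commute inner_matrix_vector_transpose)
  then show ?thesis by (simp add: M_apply inner_diff_right)
qed

lemma M_symmetric: "a \<bullet> (M *v b) = b \<bullet> (M *v a)"
  by (simp add: M_form pos_def_mat_symmetric[OF P_pd] pos_def_mat_inverse_symmetric[OF W_pd])

lemma DARE_M: "P = Q + transpose A ** M ** A"
  using DARE by (simp add: M_e_def add.commute)

lemma DARE_apply: "P *v x = Q *v x + transpose A *v (M *v (A *v x))"
  by (metis DARE_M matrix_vector_mult_add_rdistrib matrix_vector_mul_assoc)

lemma K_apply: "K *v x = matrix_inv W *v (transpose B *v (P *v (A *v x)))"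
  by (simp add: K_e_def W_def matrix_vector_mul_assoc[symmetric])

lemma K'_apply: "K'_e B R P *v z = matrix_inv W *v (transpose B *v (P *v z))"
  by (simp add: K'_e_def W_def matrix_vector_mul_assoc[symmetric])

lemma feedback_eq: "feedback \<theta> x = - (matrix_inv W *v (transpose B *v (P *v (A *v x - \<beta> \<theta>))))"
  by (simp add: feedback_def K_apply K'_apply matrix_vector_mult_diff_distrib)

lemma completing_square:
  fixes y :: "real^'n" and u :: "real^'m"
  defines "g \<equiv> matrix_inv W *v (transpose B *v (P *v y))"
  shows "(y + B *v u) \<bullet> (P *v (y + B *v u)) + u \<bullet> (R *v u)
      = y \<bullet> (M *v y) + (u + g) \<bullet> (W *v (u + g))"
proof -
  have cross: "y \<bullet> (P *v (B *v u)) = u \<bullet> (W *v g)"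
    by (metis W_inverse_cancel g_def inner_commute inner_matrix_vector_transpose
        pos_def_mat_symmetric[OF P_pd])
  have "g \<bullet> (W *v g) = (transpose B *v (P *v y)) \<bullet> (matrix_inv W *v (transpose B *v (P *v y)))"
    by (simp add: g_def W_inverse_cancel inner_commute)
  then have "y \<bullet> (M *v y) = y \<bullet> (P *v y) - g \<bullet> (W *v g)"
    by (simp add: M_form)
  then show ?thesis
    using quadratic_form_add[OF pos_def_mat_symmetric[OF P_pd], of y "B *v u"]
      quadratic_form_add[OF pos_def_mat_symmetric[OF W_pd], of u g] W_form[of u u] cross
    by linarith
qed

definition L :: "real^'n^'n" where
  "L = A - B ** K"

lemma L_apply: "L *v x = A *v x - B *v (K *v x)"
  by (simp add: L_def matrix_vector_mult_diff_rdistrib matrix_vector_mul_assoc[symmetric])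

lemma L_fixpoint_eq_0:
  assumes "L *v x = x"
  shows "x = 0"
proof -
  have "x \<bullet> (P *v x) + (K *v x) \<bullet> (R *v (K *v x)) = (A *v x) \<bullet> (M *v (A *v x))"
    using completing_square[of "A *v x" "- (K *v x)"] assms
    by (simp add: K_apply L_apply matrix_vector_mult_neg)
  moreover have "x \<bullet> (P *v x) = x \<bullet> (Q *v x) + (A *v x) \<bullet> (M *v (A *v x))"
    by (simp add: DARE_apply inner_add_right inner_matrix_vector_transpose)
  ultimately have "x \<bullet> (Q *v x) \<le> 0"
    using pos_def_mat_nonneg[OF R_pd, of "K *v x"] by linarith
  then show ?thesis by (rule pos_def_mat_eq_0[OF Q_pd])
qed

lemma closed_loop_resolvent_invertible: "invertible (mat 1 - transpose L)"
proof -
  have "invertible (mat 1 - L)"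
    by (rule invertible_if_kernel_trivial, rule L_fixpoint_eq_0)
      (simp add: matrix_vector_mult_diff_rdistrib)
  then show ?thesis
    using transpose_invertible by (fastforce simp: transpose_diff)
qed

lemma L_transpose_P: "transpose L *v (P *v b) = transpose A *v (M *v b)"
proof -
  have "(transpose L *v (P *v b)) \<bullet> v = (transpose A *v (M *v b)) \<bullet> v" for v
  proof -
    have "(transpose L *v (P *v b)) \<bullet> v = (P *v b) \<bullet> (A *v v) - (P *v b) \<bullet> (B *v (K *v v))"
      by (simp add: inner_matrix_vector_transpose[symmetric] L_apply inner_diff_right)
    also have "\<dots> = b \<bullet> (M *v (A *v v))"
      by (simp add: M_form K_apply inner_matrix_vector_transpose[of "P *v b" B]
          pos_def_mat_symmetric[OF P_pd, of b] inner_commute)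
    also have "\<dots> = (A *v v) \<bullet> (M *v b)" by (rule M_symmetric)
    also have "\<dots> = (transpose A *v (M *v b)) \<bullet> v"
      by (subst inner_commute) (rule inner_matrix_vector_transpose)
    finally show ?thesis .
  qed
  then show ?thesis using vector_eq_rdot by blast
qed

lemma alpha_e_fixpoint: "alpha_e A B Q R P \<theta> = Q *v \<theta> + transpose L *v alpha_e A B Q R P \<theta>"
proof -
  have "(mat 1 - transpose L) *v alpha_e A B Q R P \<theta> = Q *v \<theta>"
    unfolding alpha_e_def L_def by (rule matrix_inv_cancel(1)[OF closed_loop_resolvent_invertible[unfolded L_def]])
  then show ?thesis by (simp add: matrix_vector_mult_diff_rdistrib algebra_simps)
qed

lemma P_beta_eq_alpha_e: "P *v \<beta> \<theta> = alpha_e A B Q R P \<theta>"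
  unfolding beta_e_def by (rule matrix_inv_cancel(1)[OF pos_def_mat_invertible[OF P_pd]])

lemma beta_equation: "P *v \<beta> \<theta> = Q *v \<theta> + transpose A *v (M *v \<beta> \<theta>)"
  using alpha_e_fixpoint[of \<theta>] by (simp add: P_beta_eq_alpha_e[symmetric] L_transpose_P)

lemma shifted_M_form:
  "(A *v x - \<beta> \<theta>) \<bullet> (M *v (A *v x - \<beta> \<theta>))
     = (x - \<beta> \<theta>) \<bullet> (P *v (x - \<beta> \<theta>)) - (x - \<theta>) \<bullet> (Q *v (x - \<theta>))
       + (\<theta> \<bullet> (Q *v \<theta>) + \<beta> \<theta> \<bullet> (M *v \<beta> \<theta>) - \<beta> \<theta> \<bullet> (P *v \<beta> \<theta>))"
proof -
  have "(A *v x) \<bullet> (M *v (A *v x)) = x \<bullet> (P *v x) - x \<bullet> (Q *v x)"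
    using DARE_apply[of x] by (simp add: inner_transpose_left inner_add_right)
  moreover have "(A *v x) \<bullet> (M *v \<beta> \<theta>) = x \<bullet> (P *v \<beta> \<theta>) - x \<bullet> (Q *v \<theta>)"
    using beta_equation[of \<theta>] by (simp add: inner_transpose_left inner_add_right)
  ultimately show ?thesis
    using quadratic_form_diff[OF M_symmetric, of "A *v x" "\<beta> \<theta>"]
      quadratic_form_diff[OF pos_def_mat_symmetric[OF P_pd], of x "\<beta> \<theta>"]
      quadratic_form_diff[OF pos_def_mat_symmetric[OF Q_pd], of x \<theta>]
    by linarith
qed

lemma lambda_e_eq:
  "2 * lambda_e A B Q R P \<theta> = \<theta> \<bullet> (Q *v \<theta>) + \<beta> \<theta> \<bullet> (M *v \<beta> \<theta>) - \<beta> \<theta> \<bullet> (P *v \<beta> \<theta>)"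
proof -
  let ?z = "A *v \<theta> - \<beta> \<theta>" and ?d = "\<theta> - \<beta> \<theta>"
  let ?Pi = "matrix_inv P"
  note P_cancel = matrix_inv_cancel[OF pos_def_mat_invertible[OF P_pd]]
  have H_apply: "H_e A B Q R P *v z = M *v z - M *v (A *v (?Pi *v (transpose A *v (M *v z))))" for z
    by (simp add: H_e_def DARE_M[symmetric] matrix_vector_mult_diff_rdistrib
        matrix_vector_mul_assoc[symmetric])
  have AMz: "transpose A *v (M *v ?z) = P *v ?d"
    using DARE_apply[of \<theta>] beta_equation[of \<theta>]
    by (simp add: matrix_vector_mult_diff_distrib algebra_simps)
  have "?z \<bullet> (M *v (A *v (?Pi *v (transpose A *v (M *v ?z)))))
      = (A *v (?Pi *v (P *v ?d))) \<bullet> (M *v ?z)"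
    by (subst M_symmetric) (simp add: AMz)
  also have "\<dots> = ?d \<bullet> (P *v ?d)"
    by (simp add: P_cancel inner_transpose_left[symmetric] AMz inner_commute)
  finally have "?z \<bullet> (H_e A B Q R P *v ?z) = ?z \<bullet> (M *v ?z) - ?d \<bullet> (P *v ?d)"
    by (simp add: H_apply inner_diff_right)
  then show ?thesis
    using shifted_M_form[of \<theta> \<theta>] by (simp add: lambda_e_def)
qed

lemma bellman_identity:
  "stage_cost Q R \<theta> x u + h_e A B Q R P \<theta> (A *v x + B *v u)
     = h_e A B Q R P \<theta> x + lambda_e A B Q R P \<theta>
       + (1/2) * ((u - feedback \<theta> x) \<bullet> (W *v (u - feedback \<theta> x)))"
proof -
  let ?y = "A *v x - \<beta> \<theta>"
  have "A *v x + B *v u - \<beta> \<theta> = ?y + B *v u" by simp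
  moreover have "u - feedback \<theta> x = u + matrix_inv W *v (transpose B *v (P *v ?y))"
    by (simp add: feedback_eq)
  ultimately show ?thesis
    using completing_square[of ?y u] shifted_M_form[of x \<theta>] lambda_e_eq[of \<theta>]
    unfolding stage_cost_def h_e_def by (simp add: algebra_simps)
qed

lemma bellman_inequality:
  "h_e A B Q R P \<theta> x + lambda_e A B Q R P \<theta>
     \<le> stage_cost Q R \<theta> x u + h_e A B Q R P \<theta> (A *v x + B *v u)"
  using bellman_identity[of \<theta> x u] pos_def_mat_nonneg[OF W_pd, of "u - feedback \<theta> x"] by linarith

lemma bellman_feedback:
  "h_e A B Q R P \<theta> x + lambda_e A B Q R P \<theta>
     = stage_cost Q R \<theta> x (feedback \<theta> x) + h_e A B Q R P \<theta> (A *v x + B *v feedback \<theta> x)"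
  using bellman_identity[of \<theta> x "feedback \<theta> x"] by simp

lemma stage_cost_nonneg: "0 \<le> stage_cost Q R \<theta> x u"
  unfolding stage_cost_def using pos_def_mat_nonneg[OF Q_pd] pos_def_mat_nonneg[OF R_pd] by simp

lemma h_e_nonneg: "0 \<le> h_e A B Q R P \<theta> x"
  unfolding h_e_def using pos_def_mat_nonneg[OF P_pd] by simp

lemma lambda_e_nonneg: "0 \<le> lambda_e A B Q R P \<theta>"
  using bellman_feedback[of \<theta> "\<beta> \<theta>"] stage_cost_nonneg h_e_nonneg
  by (simp add: h_e_def)

lemma h_e_dominated:
  obtains a b where "0 \<le> a" and "\<And>x u. h_e A B Q R P \<theta> x \<le> a * stage_cost Q R \<theta> x u + b"
proof -
  obtain a b where "0 \<le> a"
    and ab: "\<And>x. (x - \<beta> \<theta>) \<bullet> (P *v (x - \<beta> \<theta>)) \<le> a * ((x - \<theta>) \<bullet> (Q *v (x - \<theta>))) + b"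
    using shifted_quadratic_form_dominated[OF Q_pd] by blast
  have "h_e A B Q R P \<theta> x \<le> a * stage_cost Q R \<theta> x u + b / 2" for x u
    using ab[of x] mult_left_mono[OF pos_def_mat_nonneg[OF R_pd, of u] \<open>0 \<le> a\<close>]
    unfolding h_e_def stage_cost_def by (simp add: algebra_simps)
  with \<open>0 \<le> a\<close> show thesis by (rule that)
qed

lemma closed_loop_cost:
  fixes \<theta> x0 :: "real^'n"
  defines "xs \<equiv> cl_traj A B K (K'_e B R P *v \<beta> \<theta>) x0"
  shows "(\<Sum>t<N. stage_cost Q R \<theta> (xs t) (K'_e B R P *v \<beta> \<theta> - K *v xs t))
    = real N * lambda_e A B Q R P \<theta> + h_e A B Q R P \<theta> x0 - h_e A B Q R P \<theta> (xs N)"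
proof (induction N)
  case (Suc N)
  then show ?case
    using bellman_feedback[of \<theta> "xs N"] by (simp add: xs_def feedback_def algebra_simps)
qed (simp add: xs_def)

lemma opt_cost_average_tendsto:
  "(\<lambda>N. opt_cost_N A B Q R \<theta> N x0 / real N) \<longlonglongrightarrow> lambda_e A B Q R P \<theta>"
proof -
  obtain a b where "0 \<le> a" and dominated: "\<And>x u. h_e A B Q R P \<theta> x \<le> a * stage_cost Q R \<theta> x u + b"
    using h_e_dominated by blast
  show ?thesis
  proof (rule average_tendsto_of_window_bounds[OF lambda_e_nonneg \<open>0 \<le> a\<close> h_e_nonneg])
    fix N
    let ?xs = "cl_traj A B K (K'_e B R P *v \<beta> \<theta>) x0"
    have "traj A B x0 (\<lambda>t. K'_e B R P *v \<beta> \<theta> - K *v ?xs t) t = ?xs t" for t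
      by (induction t) simp_all
    then have feedback_cost: "cost_N A B Q R \<theta> N x0 (\<lambda>t. K'_e B R P *v \<beta> \<theta> - K *v ?xs t)
        \<le> real N * lambda_e A B Q R P \<theta> + h_e A B Q R P \<theta> x0"
      using closed_loop_cost[of \<theta> x0 N] h_e_nonneg[of \<theta> "?xs N"] by (simp add: cost_N_def)
    have "bdd_below (range (cost_N A B Q R \<theta> N x0))"
      unfolding cost_N_def by (rule bdd_belowI[of _ 0]) (auto intro: sum_nonneg stage_cost_nonneg)
    then have "opt_cost_N A B Q R \<theta> N x0
        \<le> cost_N A B Q R \<theta> N x0 (\<lambda>t. K'_e B R P *v \<beta> \<theta> - K *v ?xs t)"
      unfolding opt_cost_N_def by (rule cINF_lower) simp
    with feedback_cost show "opt_cost_N A B Q R \<theta> N x0 \<le> real N * lambda_e A B Q R P \<theta> + h_e A B Q R P \<theta> x0"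
      by linarith
  next
    fix N m :: nat assume "1 \<le> m" and "m \<le> N"
    then have pos: "0 < real m + a" using \<open>0 \<le> a\<close> by simp
    let ?lb = "real m * (real N - real m) * lambda_e A B Q R P \<theta> - real m * b"
    have "?lb \<le> (real m + a) * cost_N A B Q R \<theta> N x0 u" for u
      unfolding cost_N_def
      by (rule bellman_window_lower_bound[where h = "h_e A B Q R P \<theta>",
            OF _ stage_cost_nonneg h_e_nonneg lambda_e_nonneg \<open>0 \<le> a\<close> dominated \<open>m \<le> N\<close>])
        (simp add: bellman_inequality)
    then have "?lb / (real m + a) \<le> cost_N A B Q R \<theta> N x0 u" for u
      using pos by (simp add: divide_le_eq mult.commute)
    then have "?lb / (real m + a) \<le> opt_cost_N A B Q R \<theta> N x0"
      unfolding opt_cost_N_def by (intro cINF_greatest) auto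
    then show "?lb \<le> (real m + a) * opt_cost_N A B Q R \<theta> N x0"
      using pos by (simp add: divide_le_eq mult.commute)
  qed
qed

lemma closed_loop_average_limsup:
  fixes \<theta> x0 :: "real^'n"
  defines "xs \<equiv> cl_traj A B K (K'_e B R P *v \<beta> \<theta>) x0"
  shows "limsup (\<lambda>N. ereal ((\<Sum>t<N. stage_cost Q R \<theta> (xs t) (K'_e B R P *v \<beta> \<theta> - K *v xs t))
      / real N)) \<le> ereal (lambda_e A B Q R P \<theta>)"
  using closed_loop_cost[of \<theta> x0] h_e_nonneg unfolding xs_def
  by (intro limsup_average_le[where e = "h_e A B Q R P \<theta> x0"]) (smt (verit))

end

theorem proposition1:
  fixes A :: "real^'n^'n" and B :: "real^'m^'n"
    and Q :: "real^'n^'n" and R :: "real^'m^'m" and \<theta> :: "real^'n"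
    and P :: "real^'n^'n"
  assumes ctrl: "controllable A B"
    and Q_pd: "pos_def_mat Q" and R_pd: "pos_def_mat R"
    and P_pd: "pos_def_mat P"
    and DARE: "P = Q + transpose A ** (P - P ** B ** matrix_inv (transpose B ** P ** B + R)
                      ** transpose B ** P) ** A"
  shows "(\<forall>x0. (\<lambda>N. opt_cost_N A B Q R \<theta> N x0 / real N) \<longlonglongrightarrow> lambda_e A B Q R P \<theta>)
    \<and> (\<forall>x. (\<exists>u. h_e A B Q R P \<theta> x + lambda_e A B Q R P \<theta>
                  = stage_cost Q R \<theta> x u + h_e A B Q R P \<theta> (A *v x + B *v u))
          \<and> (\<forall>u. h_e A B Q R P \<theta> x + lambda_e A B Q R P \<theta>
                  \<le> stage_cost Q R \<theta> x u + h_e A B Q R P \<theta> (A *v x + B *v u)))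
    \<and> (\<forall>x0. limsup (\<lambda>N. ereal ((\<Sum>t<N.
              stage_cost Q R \<theta> (cl_traj A B (K_e A B R P) (K'_e B R P *v beta_e A B Q R P \<theta>) x0 t)
                (K'_e B R P *v beta_e A B Q R P \<theta>
                   - K_e A B R P *v cl_traj A B (K_e A B R P) (K'_e B R P *v beta_e A B Q R P \<theta>) x0 t))
              / real N)) \<le> ereal (lambda_e A B Q R P \<theta>))"
proof -
  \<comment> \<open>Controllability only guarantees that a positive definite solution P exists; given P,
    the argument does not use it.\<close>
  interpret dare_solution A B Q R P
    using Q_pd R_pd P_pd DARE by unfold_locales
  show ?thesis
    using opt_cost_average_tendsto bellman_feedback bellman_inequality closed_loop_average_limsup
    by blast
qed

end
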